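(* Let $q$ be an even positive integer and $h_q(x_1,\dots,x_d):=\sum_{\mathbf{k}\in\mathbb{Z}_{\ge0}^d,\ \|\mathbf{k}\|_1=q}x_1^{k_1}\cdots x_d^{k_d}$ the complete homogeneous symmetric polynomial of degree $q$ in $d$ variables. In each of the cases (a) $q=2$, (b) $d=2$, (c) $d=3$ and $q=4$, we have for all $(x_1,\dots,x_d)\in\mathbb{R}^d$ $$h_q(x_1,\dots,x_d)\ge\frac12\sum_{j=1}^d x_j^q.$$ *)

theory Defs
  imports Complex_Main
begin

definition complete_hom :: "nat \<Rightarrow> nat \<Rightarrow> (nat \<Rightarrow> real) \<Rightarrow> real" where
  "complete_hom d q x =
     (\<Sum>k\<in>{k :: nat \<Rightarrow> nat. (\<forall>i. d \<le> i \<longrightarrow> k i = 0) \<and> (\<Sum>i<d. k i) = q}.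
        \<Prod>i<d. x i ^ k i)"

end

theory Submission
  imports Defs
begin

text \<open>In each case 2 h_q(x) - (x_1^q + ... + x_d^q) is visibly nonnegative.
  For q = 2 it equals (x_1 + ... + x_d)^2, and for d = 3, q = 4 it equals
  (x_1 + x_2 + x_3)^2 (x_1^2 + x_2^2 + x_3^2).
  For d = 2, writing h_n for h_n(a, b), the two recursions
  h_(n+1) = a^(n+1) + b h_n = a h_n + b^(n+1) give
  2 h_(n+1) - a^(n+1) - b^(n+1) = (a + b) h_n, and for odd n the right-hand
  side is nonnegative by induction, since
  (a + b) h_(n+2) = (a + b)^2 a^(n+1) + b^2 (a + b) h_n.\<close>

definition exponent_vectors :: "nat \<Rightarrow> nat \<Rightarrow> (nat \<Rightarrow> nat) set" where
  "exponent_vectors d q = {k. (\<forall>i. d \<le> i \<longrightarrow> k i = 0) \<and> (\<Sum>i<d. k i) = q}"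

lemma exponent_vectors_0: "exponent_vectors 0 q = (if q = 0 then {\<lambda>_. 0} else {})"
  unfolding exponent_vectors_def by auto

lemma bij_betw_exponent_vectors_Suc:
  "bij_betw (\<lambda>(j, k). k(d := j))
     (SIGMA j:{..q}. exponent_vectors d (q - j)) (exponent_vectors (Suc d) q)"
proof (rule bij_betw_byWitness[where f' = "\<lambda>k. (k d, k(d := 0))"])
  have sum_upd: "(\<Sum>i<d. (k(d := j)) i) = (\<Sum>i<d. k i)" for k :: "nat \<Rightarrow> nat" and j
    by (rule sum.cong) auto
  show "\<forall>p \<in> (SIGMA j:{..q}. exponent_vectors d (q - j)).
          (\<lambda>k. (k d, k(d := 0))) ((\<lambda>(j, k). k(d := j)) p) = p"
    by (auto simp: exponent_vectors_def)
  show "\<forall>k \<in> exponent_vectors (Suc d) q. (\<lambda>(j, k). k(d := j)) (k d, k(d := 0)) = k"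
    by auto
  show "(\<lambda>(j, k). k(d := j)) ` (SIGMA j:{..q}. exponent_vectors d (q - j))
          \<subseteq> exponent_vectors (Suc d) q"
    by (auto simp: exponent_vectors_def sum_upd)
  show "(\<lambda>k. (k d, k(d := 0))) ` exponent_vectors (Suc d) q
          \<subseteq> (SIGMA j:{..q}. exponent_vectors d (q - j))"
    by (auto simp: exponent_vectors_def sum_upd)
qed

lemma finite_exponent_vectors: "finite (exponent_vectors d q)"
proof (induction d arbitrary: q)
  case 0
  show ?case by (simp add: exponent_vectors_0)
next
  case (Suc d)
  have "finite (SIGMA j:{..q}. exponent_vectors d (q - j))"
    using Suc by blast
  then show ?case
    using bij_betw_finite[OF bij_betw_exponent_vectors_Suc] by blast
qed

lemma complete_hom_eq_sum_exponent_vectors: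
  "complete_hom d q x = (\<Sum>k\<in>exponent_vectors d q. \<Prod>i<d. x i ^ k i)"
  unfolding complete_hom_def exponent_vectors_def ..

lemma complete_hom_0: "complete_hom 0 q x = (if q = 0 then 1 else 0)"
  by (simp add: complete_hom_eq_sum_exponent_vectors exponent_vectors_0)

lemma complete_hom_Suc:
  "complete_hom (Suc d) q x = (\<Sum>j\<le>q. x d ^ j * complete_hom d (q - j) x)"
proof -
  have prod_upd: "(\<Prod>i<Suc d. x i ^ (k(d := j)) i) = x d ^ j * (\<Prod>i<d. x i ^ k i)"
    for k j
  proof -
    have "(\<Prod>i<d. x i ^ (k(d := j)) i) = (\<Prod>i<d. x i ^ k i)"
      by (rule prod.cong) auto
    then show ?thesis by (simp add: mult.commute)
  qed
  have "complete_hom (Suc d) q x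
      = (\<Sum>(j, k)\<in>(SIGMA j:{..q}. exponent_vectors d (q - j)). \<Prod>i<Suc d. x i ^ (k(d := j)) i)"
    unfolding complete_hom_eq_sum_exponent_vectors
    by (subst sum.reindex_bij_betw[OF bij_betw_exponent_vectors_Suc, symmetric])
       (simp add: case_prod_beta)
  also have "\<dots> = (\<Sum>j\<le>q. \<Sum>k\<in>exponent_vectors d (q - j). x d ^ j * (\<Prod>i<d. x i ^ k i))"
    by (subst sum.Sigma[symmetric]) (auto simp: finite_exponent_vectors prod_upd mult.commute)
  also have "\<dots> = (\<Sum>j\<le>q. x d ^ j * complete_hom d (q - j) x)"
    by (simp add: complete_hom_eq_sum_exponent_vectors sum_distrib_left)
  finally show ?thesis .
qed

lemma complete_hom_degree_0: "complete_hom d 0 x = 1"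
  by (induction d) (auto simp: complete_hom_0 complete_hom_Suc)

lemma complete_hom_degree_1: "complete_hom d 1 x = (\<Sum>i<d. x i)"
  by (induction d) (auto simp: complete_hom_0 complete_hom_Suc complete_hom_degree_0)

lemma complete_hom_degree_2:
  "complete_hom d 2 x = ((\<Sum>i<d. x i ^ 2) + (\<Sum>i<d. x i) ^ 2) / 2"
proof (induction d)
  case 0
  show ?case by (simp add: complete_hom_0)
next
  case (Suc d)
  have "complete_hom (Suc d) 2 x = complete_hom d 2 x + x d * complete_hom d 1 x + x d ^ 2"
    by (simp add: complete_hom_Suc numeral_2_eq_2 complete_hom_degree_0)
  then show ?case
    using Suc complete_hom_degree_1[of d x] by (simp add: field_simps power2_eq_square)
qed

lemma complete_hom_one_var: "complete_hom 1 n x = x 0 ^ n"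
proof -
  have "complete_hom 1 n x = (\<Sum>j\<le>n. if j = n then x 0 ^ j else 0)"
    unfolding One_nat_def complete_hom_Suc complete_hom_0 by (rule sum.cong) auto
  then show ?thesis by simp
qed

lemma complete_hom_two_vars: "complete_hom 2 n x = (\<Sum>j\<le>n. x 1 ^ j * x 0 ^ (n - j))"
proof -
  have "complete_hom 2 n x = complete_hom (Suc 1) n x"
    by (simp add: numeral_2_eq_2)
  also have "\<dots> = (\<Sum>j\<le>n. x 1 ^ j * complete_hom 1 (n - j) x)"
    by (rule complete_hom_Suc)
  finally show ?thesis
    by (simp only: complete_hom_one_var)
qed

lemma complete_hom_two_vars_Suc_left:
  "complete_hom 2 (Suc n) x = x 0 ^ Suc n + x 1 * complete_hom 2 n x"
  unfolding complete_hom_two_vars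
  by (subst sum.atMost_Suc_shift) (simp add: sum_distrib_left mult.assoc)

lemma complete_hom_two_vars_Suc_right:
  "complete_hom 2 (Suc n) x = x 0 * complete_hom 2 n x + x 1 ^ Suc n"
  unfolding complete_hom_two_vars sum.atMost_Suc sum_distrib_left
  by (simp add: Suc_diff_le mult.left_commute)

lemma complete_hom_two_vars_excess:
  "2 * complete_hom 2 (Suc n) x - x 0 ^ Suc n - x 1 ^ Suc n = (x 0 + x 1) * complete_hom 2 n x"
  using complete_hom_two_vars_Suc_left[of n x] complete_hom_two_vars_Suc_right[of n x]
  by (simp add: algebra_simps)

lemma complete_hom_two_vars_odd_nonneg: "0 \<le> (x 0 + x 1) * complete_hom 2 (2 * m + 1) x"
proof (induction m)
  case 0
  show ?case
    using complete_hom_two_vars_Suc_left[of 0 x] by (simp add: complete_hom_degree_0)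
next
  case (Suc m)
  define n where "n = 2 * m + 1"
  have "(x 0 + x 1) * complete_hom 2 (Suc (Suc n)) x
      = (x 0 + x 1)\<^sup>2 * x 0 ^ Suc n + (x 1)\<^sup>2 * ((x 0 + x 1) * complete_hom 2 n x)"
    unfolding complete_hom_two_vars_Suc_left by (simp add: algebra_simps power2_eq_square)
  moreover have "0 \<le> x 0 ^ Suc n"
    unfolding n_def by (rule zero_le_even_power) simp
  moreover have "0 \<le> (x 0 + x 1) * complete_hom 2 n x"
    using Suc by (simp add: n_def)
  ultimately show ?case
    by (simp add: n_def)
qed

lemma complete_hom_degree_2_lower_bound:
  "complete_hom d 2 x \<ge> (1/2) * (\<Sum>j<d. x j ^ 2)"
  by (simp add: complete_hom_degree_2)

lemma complete_hom_two_vars_lower_bound: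
  assumes "even q" and "q > 0"
  shows "complete_hom 2 q x \<ge> (1/2) * (\<Sum>j<2. x j ^ q)"
proof -
  obtain k where "q = 2 * k"
    using \<open>even q\<close> by (rule evenE)
  with \<open>q > 0\<close> have q: "q = Suc (2 * (k - 1) + 1)"
    by simp
  have "0 \<le> 2 * complete_hom 2 q x - x 0 ^ q - x 1 ^ q"
    unfolding q complete_hom_two_vars_excess by (rule complete_hom_two_vars_odd_nonneg)
  then show ?thesis
    by (simp add: numeral_2_eq_2)
qed

lemma complete_hom_3_4_excess:
  "2 * complete_hom 3 4 x - (\<Sum>j<3. x j ^ 4)
     = (x 0 + x 1 + x 2)\<^sup>2 * ((x 0)\<^sup>2 + (x 1)\<^sup>2 + (x 2)\<^sup>2)"
  by (simp add: eval_nat_numeral complete_hom_Suc complete_hom_one_var complete_hom_0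
      algebra_simps)

lemma complete_hom_3_4_lower_bound: "complete_hom 3 4 x \<ge> (1/2) * (\<Sum>j<3. x j ^ 4)"
proof -
  have "0 \<le> (x 0 + x 1 + x 2)\<^sup>2 * ((x 0)\<^sup>2 + (x 1)\<^sup>2 + (x 2)\<^sup>2)"
    by simp
  then show ?thesis
    using complete_hom_3_4_excess[of x] by linarith
qed

theorem proposition3:
  fixes d q :: nat and x :: "nat \<Rightarrow> real"
  assumes "even q" and "q > 0"
    and "q = 2 \<or> d = 2 \<or> (d = 3 \<and> q = 4)"
  shows "complete_hom d q x \<ge> (1/2) * (\<Sum>j<d. x j ^ q)"
  using assms complete_hom_degree_2_lower_bound complete_hom_two_vars_lower_bound
    complete_hom_3_4_lower_bound
  by blast

end
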